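(* Let $n$ be even. Then there is no nondegenerate $n$-dimensional simplex $S$ with $\mathrm{ver}(S)\subset\mathrm{ver}(Q_n)$ and $S\subset Q_n\subset nS$.
   Context: $Q_n=[0,1]^n$; $\mathrm{ver}(\cdot)$ is the vertex set. $nS$ denotes the image of $S$ under the homothety with center at the center of gravity of $S$ and ratio $n$. *)

theory Defs
  imports "HOL-Analysis.Analysis"
begin

text \<open>The unit cube Q_n = [0,1]^n in R^n (dimension n = CARD('n)).\<close>
definition unit_cube :: "(real^'n) set" where
  "unit_cube = cbox 0 1"

definition cube_vertices :: "(real^'n) set" where
  "cube_vertices = {x. \<forall>i. x $ i = 0 \<or> x $ i = 1}"

definition nondeg_simplex_vertices :: "(real^'n) set \<Rightarrow> bool" where
  "nondeg_simplex_vertices V \<longleftrightarrow>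
     finite V \<and> card V = CARD('n) + 1 \<and> \<not> affine_dependent V"

text \<open>Center of gravity of the simplex conv V (equals the average of its vertices).\<close>
definition simplex_centroid :: "(real^'n) set \<Rightarrow> real^'n" where
  "simplex_centroid V = (1 / real (card V)) *\<^sub>R (\<Sum>v\<in>V. v)"

definition homothetic_image :: "real^'n \<Rightarrow> real \<Rightarrow> (real^'n) set \<Rightarrow> (real^'n) set" where
  "homothetic_image c t S = (\<lambda>x. c + t *\<^sub>R (x - c)) ` S"

end

theory Submission
  imports Defs
begin

text \<open>Let u be the centre of the cube and c the centroid of S. For a vertex v of S, the
  reflected vertex 1 - v = 2u - v of the cube lies in nS, i.e. equals c + n(y - c) with y
  in S. Hence u = v/2 + ((1 - n)/2) c + (n/2) y is an affine combination of the vertices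
  whose coefficient at v is at least 1/(n+1). Barycentric coordinates are unique, so u has
  all its n+1 coordinates at least 1/(n+1), hence equal to 1/(n+1): u = c. Reading off
  one coordinate, 1/2 = k/(n+1) where k counts the vertices with that coordinate equal to 1,
  so n + 1 is even.\<close>

lemma affine_independent_coeffs_unique:
  fixes V :: "'a::real_vector set"
  assumes "finite V" "\<not> affine_dependent V" "sum a V = 1" "sum b V = 1"
    "(\<Sum>k\<in>V. a k *\<^sub>R k) = (\<Sum>k\<in>V. b k *\<^sub>R k)" "k \<in> V"
  shows "a k = b k"
proof (rule ccontr)
  assume "a k \<noteq> b k"
  moreover have "sum (\<lambda>v. a v - b v) V = 0"
    using assms by (simp add: sum_subtractf)
  moreover have "(\<Sum>v\<in>V. (a v - b v) *\<^sub>R v) = 0"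
    using assms(5) by (simp add: scaleR_diff_left sum_subtractf)
  ultimately have "affine_dependent V"
    using assms(6) unfolding affine_dependent_explicit_finite[OF assms(1)]
    by (intro exI[of _ "\<lambda>v. a v - b v"]) auto
  with assms(2) show False by simp
qed

lemma sum_eq_card_mult_lower_bound_imp_eq:
  fixes f :: "'a \<Rightarrow> real"
  assumes "finite A" "\<forall>x\<in>A. c \<le> f x" "sum f A = real (card A) * c" "x \<in> A"
  shows "f x = c"
proof -
  have "sum (\<lambda>x. f x - c) A = 0"
    using assms(3) by (simp add: sum_subtractf)
  moreover have "\<And>x. x \<in> A \<Longrightarrow> 0 \<le> f x - c"
    using assms(2) by simp
  ultimately have "\<forall>x\<in>A. f x - c = 0"
    by (subst sum_nonneg_eq_0_iff[OF assms(1), symmetric])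
  with assms(4) show ?thesis by simp
qed

lemma homothetic_image_centroid_coeffs:
  fixes V :: "(real^'n) set"
  assumes "finite V" "V \<noteq> {}" "0 \<le> t"
    "x \<in> homothetic_image (simplex_centroid V) t (convex hull V)"
  shows "\<exists>w. sum w V = 1 \<and> (\<Sum>k\<in>V. w k *\<^sub>R k) = x \<and> (\<forall>k\<in>V. (1 - t) / card V \<le> w k)"
proof -
  define m where "m = real (card V)"
  have "m > 0" using assms(1,2) by (simp add: m_def card_gt_0_iff)
  obtain y where y: "y \<in> convex hull V"
    and x: "x = simplex_centroid V + t *\<^sub>R (y - simplex_centroid V)"
    using assms(4) unfolding homothetic_image_def by blast
  obtain \<mu> where \<mu>0: "\<forall>k\<in>V. 0 \<le> \<mu> k" and \<mu>1: "sum \<mu> V = 1"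
    and \<mu>y: "(\<Sum>k\<in>V. \<mu> k *\<^sub>R k) = y"
    using y unfolding convex_hull_finite[OF assms(1)] by blast
  define w where "w k = (1 - t) / m + t * \<mu> k" for k
  have "(\<Sum>k\<in>V. w k *\<^sub>R k) = (1 - t) *\<^sub>R simplex_centroid V + t *\<^sub>R y"
    unfolding w_def simplex_centroid_def m_def \<mu>y[symmetric]
    by (simp add: scaleR_add_left sum.distrib scaleR_sum_right)
  also have "\<dots> = x"
    unfolding x by (simp add: algebra_simps)
  finally have "(\<Sum>k\<in>V. w k *\<^sub>R k) = x" .
  moreover have "sum w V = 1"
    using \<open>m > 0\<close> \<mu>1 unfolding w_def m_def
    by (simp add: sum.distrib sum_distrib_left[symmetric])
  moreover have "\<forall>k\<in>V. (1 - t) / card V \<le> w k"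
    using \<mu>0 assms(3) unfolding w_def m_def by simp
  ultimately show ?thesis by blast
qed

lemma centroid_if_reflections_in_homothetic_image:
  fixes V :: "(real^'n) set"
  assumes "finite V" "\<not> affine_dependent V" "V \<noteq> {}" "0 \<le> t" "t \<le> real (card V) - 1"
    and reflections: "\<forall>v\<in>V. 2 *\<^sub>R u - v \<in> homothetic_image (simplex_centroid V) t (convex hull V)"
  shows "u = simplex_centroid V"
proof -
  define m where "m = real (card V)"
  have "m > 0" using assms(1,3) by (simp add: m_def card_gt_0_iff)
  have coeffs_at: "\<exists>w. sum w V = 1 \<and> (\<Sum>k\<in>V. w k *\<^sub>R k) = u \<and> 1 / m \<le> w v"
    if "v \<in> V" for v
  proof -
    obtain w where w1: "sum w V = 1" and wx: "(\<Sum>k\<in>V. w k *\<^sub>R k) = 2 *\<^sub>R u - v"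
      and wge: "\<forall>k\<in>V. (1 - t) / m \<le> w k"
      using homothetic_image_centroid_coeffs[OF assms(1,3,4)] reflections \<open>v \<in> V\<close>
      unfolding m_def by blast
    \<comment> \<open>u is the midpoint of v and its reflection 2u - v\<close>
    define w' where "w' k = (1/2) * ((if k = v then 1 else 0) + w k)" for k
    have "(\<Sum>k\<in>V. (if k = v then 1 else 0) *\<^sub>R k) = v"
      using assms(1) \<open>v \<in> V\<close> by (simp add: if_distrib[of "\<lambda>a. a *\<^sub>R _"] cong: if_cong)
    then have "(\<Sum>k\<in>V. w' k *\<^sub>R k) = (1/2) *\<^sub>R (v + (\<Sum>k\<in>V. w k *\<^sub>R k))"
      unfolding w'_def scaleR_scaleR[symmetric] scaleR_sum_right[symmetric]
      by (simp add: scaleR_add_left sum.distrib)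
    then have "(\<Sum>k\<in>V. w' k *\<^sub>R k) = u"
      unfolding wx by simp
    moreover have "sum w' V = 1"
      using assms(1) \<open>v \<in> V\<close> w1 unfolding w'_def
      by (simp add: sum.distrib sum_divide_distrib[symmetric])
    moreover have "1 / m \<le> w' v"
    proof -
      have "1 \<le> t + m * w v"
        using wge \<open>v \<in> V\<close> \<open>m > 0\<close> by (simp add: field_simps)
      then show ?thesis
        using assms(5) \<open>m > 0\<close> unfolding w'_def m_def[symmetric] by (simp add: field_simps)
    qed
    ultimately show ?thesis by auto
  qed
  obtain v0 where "v0 \<in> V" using assms(3) by blast
  then obtain \<beta> where \<beta>1: "sum \<beta> V = 1" and \<beta>u: "(\<Sum>k\<in>V. \<beta> k *\<^sub>R k) = u"
    using coeffs_at by blast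
  have "1 / m \<le> \<beta> v" if "v \<in> V" for v
  proof -
    obtain w where "sum w V = 1" "(\<Sum>k\<in>V. w k *\<^sub>R k) = u" "1 / m \<le> w v"
      using coeffs_at \<open>v \<in> V\<close> by blast
    with affine_independent_coeffs_unique[OF assms(1,2) \<beta>1] \<beta>u \<open>v \<in> V\<close>
    show ?thesis by metis
  qed
  then have "\<beta> k = 1 / m" if "k \<in> V" for k
    using sum_eq_card_mult_lower_bound_imp_eq[OF assms(1) _ _ that] \<beta>1 \<open>m > 0\<close>
    unfolding m_def by simp
  then have "u = (\<Sum>k\<in>V. (1 / m) *\<^sub>R k)"
    unfolding \<beta>u[symmetric] by (intro sum.cong) auto
  then show ?thesis
    unfolding simplex_centroid_def m_def by (simp add: scaleR_sum_right)
qed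

lemma one_minus_cube_vertex_in_unit_cube:
  fixes v :: "real^'n"
  assumes "v \<in> cube_vertices"
  shows "1 - v \<in> unit_cube"
  unfolding unit_cube_def mem_box_cart
proof
  fix i
  have "v $ i = 0 \<or> v $ i = 1"
    using assms unfolding cube_vertices_def by blast
  then show "0 $ i \<le> (1 - v) $ i \<and> (1 - v) $ i \<le> 1 $ i"
    by auto
qed

lemma even_card_if_centroid_eq_cube_centre:
  fixes V :: "(real^'n) set"
  assumes "finite V" "V \<subseteq> cube_vertices" "simplex_centroid V = (1/2) *\<^sub>R 1"
  shows "even (card V)"
proof -
  fix i :: 'n
  have "(\<Sum>k\<in>V. k $ i) = (\<Sum>k\<in>V. if k $ i = 1 then 1 else 0)"
    using assms(2) unfolding cube_vertices_def by (intro sum.cong) auto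
  also have "\<dots> = real (card {k\<in>V. k $ i = 1})"
    using assms(1) by (simp add: sum.If_cases Int_def)
  finally have "1/2 = real (card {k\<in>V. k $ i = 1}) / real (card V)"
    using arg_cong[OF assms(3), of "\<lambda>x. x $ i"]
    unfolding simplex_centroid_def by (simp add: sum_component)
  then have "card V = 2 * card {k\<in>V. k $ i = 1}"
    by (cases "card V = 0") (simp_all add: field_simps)
  then show ?thesis by simp
qed

theorem mainTheorem3:
  fixes V :: "(real^'n) set"
  assumes "even CARD('n)"
  shows "\<not> (nondeg_simplex_vertices V \<and> V \<subseteq> cube_vertices \<and>
             convex hull V \<subseteq> unit_cube \<and>
             unit_cube \<subseteq> homothetic_image (simplex_centroid V) (real CARD('n)) (convex hull V))"
proof
  assume S: "nondeg_simplex_vertices V \<and> V \<subseteq> cube_vertices \<and>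
             convex hull V \<subseteq> unit_cube \<and>
             unit_cube \<subseteq> homothetic_image (simplex_centroid V) (real CARD('n)) (convex hull V)"
  then have V: "finite V" "card V = CARD('n) + 1" "\<not> affine_dependent V"
    unfolding nondeg_simplex_vertices_def by auto
  have "(1/2) *\<^sub>R 1 = simplex_centroid V"
  proof (rule centroid_if_reflections_in_homothetic_image)
    show "\<forall>v\<in>V. 2 *\<^sub>R ((1/2) *\<^sub>R 1) - v
            \<in> homothetic_image (simplex_centroid V) (real CARD('n)) (convex hull V)"
      using S one_minus_cube_vertex_in_unit_cube by auto
  qed (use V in auto)
  then have "even (card V)"
    using S by (intro even_card_if_centroid_eq_cube_centre[OF V(1)]) auto
  with assms V(2) show False by simp
qed

end
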